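(* A digraph $X$ has every eigenvalue of $H(X)$ in $\{-1,1\}$ if and only if $\Gamma(X)\cong mK_2$ (the disjoint union of $m$ copies of $K_2$) for some $m$.
   Context: A digraph $X$ has a finite vertex set and an arc set of ordered pairs of distinct vertices. The underlying graph $\Gamma(X)$ is the simple graph with an edge $\{x,y\}$ whenever $xy$ or $yx$ is an arc. The Hermitian adjacency matrix $H(X)$ has $(u,v)$-entry $1$ if $uv$ and $vu$ are arcs, $i$ if only $uv$ is an arc, $-i$ if only $vu$ is an arc, and $0$ otherwise. *)

theory Defs
  imports Complex_Main "Jordan_Normal_Form.Char_Poly"
begin

definition digraph :: "nat \<Rightarrow> (nat \<times> nat) set \<Rightarrow> bool" where
  "digraph n A \<longleftrightarrow> A \<subseteq> {0..<n} \<times> {0..<n} \<and> (\<forall>(u,v)\<in>A. u \<noteq> v)"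

definition herm_adj :: "nat \<Rightarrow> (nat \<times> nat) set \<Rightarrow> complex mat" where
  "herm_adj n A = mat n n (\<lambda>(u,v).
     if (u,v) \<in> A \<and> (v,u) \<in> A then 1
     else if (u,v) \<in> A then \<i>
     else if (v,u) \<in> A then - \<i>
     else 0)"

definition underlying_adj :: "(nat \<times> nat) set \<Rightarrow> nat \<Rightarrow> nat \<Rightarrow> bool" where
  "underlying_adj A u v \<longleftrightarrow> (u,v) \<in> A \<or> (v,u) \<in> A"

definition mK2_adj :: "nat \<Rightarrow> nat \<Rightarrow> nat \<Rightarrow> bool" where
  "mK2_adj m i j \<longleftrightarrow> i < 2*m \<and> j < 2*m \<and> i \<noteq> j \<and> i div 2 = j div 2"

definition underlying_iso_mK2 :: "nat \<Rightarrow> (nat \<times> nat) set \<Rightarrow> nat \<Rightarrow> bool" where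
  "underlying_iso_mK2 n A m \<longleftrightarrow>
     (\<exists>f. bij_betw f {0..<n} {0..<2*m} \<and>
          (\<forall>u\<in>{0..<n}. \<forall>v\<in>{0..<n}. underlying_adj A u v \<longleftrightarrow> mK2_adj m (f u) (f v)))"

end

theory Submission
  imports Defs "Jordan_Normal_Form.Schur_Decomposition"
begin

text \<open>
  Over \<open>\<complex>\<close>, the trace of \<open>H\<^sup>k\<close> is the sum of the \<open>k\<close>-th powers of the eigenvalues, so a spectrum
  in \<open>{-1, 1}\<close> forces \<open>tr H\<^sup>2 = tr H\<^sup>4 = n\<close>. The diagonal of \<open>H\<^sup>2\<close> holds the degrees \<open>d\<^sub>u\<close> of the
  underlying graph, and since \<open>H\<^sup>2\<close> is Hermitian, \<open>tr H\<^sup>4\<close> is the sum of the squared moduli of its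
  entries. Hence \<open>\<Sum> d\<^sub>u = n\<close> and \<open>\<Sum> d\<^sub>u\<^sup>2 \<le> n\<close>, which forces every degree to be \<open>1\<close>, i.e. the
  underlying graph is a perfect matching \<open>mK\<^sub>2\<close>. Conversely, on a perfect matching \<open>H\<^sup>2 = I\<close>, so every
  eigenvalue squares to \<open>1\<close>.
\<close>

section \<open>Traces of matrix powers\<close>

definition trace :: "'a::comm_ring_1 mat \<Rightarrow> 'a" where
  "trace A = (\<Sum>i<dim_row A. A $$ (i,i))"

lemma trace_mult_comm:
  assumes A: "A \<in> carrier_mat n m" and B: "B \<in> carrier_mat m n"
  shows "trace (A * B) = trace (B * A)"
proof -
  have "trace (A * B) = (\<Sum>i<n. \<Sum>k<m. A $$ (i,k) * B $$ (k,i))"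
    using A B by (simp add: trace_def scalar_prod_def lessThan_atLeast0)
  also have "\<dots> = (\<Sum>k<m. \<Sum>i<n. B $$ (k,i) * A $$ (i,k))"
    by (subst sum.swap) (simp add: mult.commute)
  also have "\<dots> = trace (B * A)"
    using A B by (simp add: trace_def scalar_prod_def lessThan_atLeast0)
  finally show ?thesis .
qed

lemma trace_similar_mat_wit:
  assumes "similar_mat_wit A B P Q"
  shows "trace A = trace B"
proof -
  define n where "n = dim_row A"
  note wit = similar_mat_witD[OF n_def assms]
  have "trace A = trace (Q * (P * B))"
    unfolding wit(3) using wit(5-7) by (intro trace_mult_comm) auto
  also have "Q * (P * B) = (Q * P) * B"
    by (rule assoc_mult_mat[symmetric, of _ n n _ n _ n]) (simp_all add: wit)
  also have "\<dots> = B" using wit(2,5) by simp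
  finally show ?thesis .
qed

lemma upper_triangular_pow_mat:
  fixes B :: "'a::comm_semiring_1 mat"
  assumes B: "B \<in> carrier_mat n n" and ut: "upper_triangular B"
  shows "upper_triangular (B ^\<^sub>m k) \<and> (\<forall>i<n. (B ^\<^sub>m k) $$ (i,i) = B $$ (i,i) ^ k)"
proof (induction k)
  case 0
  then show ?case using B by auto
next
  case (Suc k)
  let ?X = "B ^\<^sub>m k"
  have X: "?X \<in> carrier_mat n n" using B by simp
  have utX: "upper_triangular ?X" and dX: "\<forall>i<n. ?X $$ (i,i) = B $$ (i,i) ^ k"
    using Suc by auto
  have entry: "(?X * B) $$ (i,j) = (\<Sum>l<n. ?X $$ (i,l) * B $$ (l,j))" if "i < n" "j < n" for i j
    using that X B by (simp add: scalar_prod_def lessThan_atLeast0)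
  have vanish: "?X $$ (i,l) * B $$ (l,j) = 0"
    if "i < n" "l < n" "j \<le> i" "l \<noteq> i \<or> j \<noteq> i" for i j l
  proof (cases "l < i")
    case True
    then show ?thesis using upper_triangularD[OF utX True] that X B by simp
  next
    case False
    then have "j < l" using that by auto
    then show ?thesis using upper_triangularD[OF ut \<open>j < l\<close>] that B by simp
  qed
  have "upper_triangular (?X * B)"
  proof
    fix i j assume ji: "j < i" and i: "i < dim_row (?X * B)"
    then have "i < n" using B by simp
    then show "(?X * B) $$ (i,j) = 0"
      using entry[of i j] vanish[of i _ j] ji by (simp add: sum.neutral)
  qed
  moreover have "(?X * B) $$ (i,i) = B $$ (i,i) ^ Suc k" if i: "i < n" for i
  proof -
    have "(\<Sum>l<n. ?X $$ (i,l) * B $$ (l,i)) = ?X $$ (i,i) * B $$ (i,i)"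
      using i vanish[of i _ i] by (subst sum.remove[of _ i]) (auto intro: sum.neutral)
    then show ?thesis using entry[of i i] i dX by (simp add: mult.commute)
  qed
  ultimately show ?case by simp
qed

lemma trace_pow_mat_char_poly_roots:
  fixes A :: "'a::conjugatable_ordered_field mat"
  assumes A: "A \<in> carrier_mat n n" and cp: "char_poly A = (\<Prod>e\<leftarrow>es. [:- e, 1:])"
  shows "trace (A ^\<^sub>m k) = (\<Sum>e\<leftarrow>es. e ^ k)"
proof -
  obtain B P Q where "schur_decomposition A es = (B,P,Q)"
    by (cases "schur_decomposition A es") auto
  from schur_decomposition[OF A cp this]
  have wit: "similar_mat_wit A B P Q" and ut: "upper_triangular B" and diag: "diag_mat B = es"
    by auto
  have B: "B \<in> carrier_mat n n" using similar_mat_witD2(5)[OF A wit] .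
  have len: "length es = n" using B diag[symmetric] by (simp add: diag_mat_def)
  have "trace (A ^\<^sub>m k) = trace (B ^\<^sub>m k)"
    by (rule trace_similar_mat_wit[OF similar_mat_wit_pow[OF wit]])
  also have "\<dots> = (\<Sum>i<n. (es ! i) ^ k)"
    using upper_triangular_pow_mat[OF B ut, of k] B diag[symmetric]
    by (simp add: trace_def diag_mat_def)
  also have "\<dots> = (\<Sum>e\<leftarrow>es. e ^ k)"
    by (simp add: sum_list_sum_nth len atLeast0LessThan)
  finally show ?thesis .
qed

lemma trace_even_pow_mat_unit_spectrum:
  fixes A :: "complex mat"
  assumes A: "A \<in> carrier_mat n n"
    and spec: "\<forall>e. eigenvalue A e \<longrightarrow> e \<in> {-1, 1}" and k: "even k"
  shows "trace (A ^\<^sub>m k) = of_nat n"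
proof -
  obtain es where cp: "char_poly A = (\<Prod>e\<leftarrow>es. [:- e, 1:])" and len: "length es = n"
    using char_poly_factorized[OF A] by auto
  have "e ^ k = 1" if "e \<in> set es" for e
  proof -
    have "poly (char_poly A) e = 0"
      unfolding cp using that by (simp add: poly_prod_list prod_list_zero_iff)
    then have "e \<in> {-1, 1}" using spec eigenvalue_root_char_poly[OF A] by blast
    then show ?thesis using k by auto
  qed
  then have "(\<Sum>e\<leftarrow>es. e ^ k) = (\<Sum>e\<leftarrow>es. 1)"
    by (intro arg_cong[where f = sum_list] map_cong) auto
  then show ?thesis
    using trace_pow_mat_char_poly_roots[OF A cp, of k] len by (simp add: sum_list_triv)
qed

lemma trace_mult_self_hermitian:
  fixes X :: "complex mat"
  assumes X: "X \<in> carrier_mat n n"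
    and herm: "\<And>u w. u < n \<Longrightarrow> w < n \<Longrightarrow> X $$ (w,u) = cnj (X $$ (u,w))"
  shows "trace (X * X) = of_real (\<Sum>u<n. \<Sum>w<n. (cmod (X $$ (u,w)))\<^sup>2)"
proof -
  have "trace (X * X) = (\<Sum>u<n. \<Sum>w<n. X $$ (u,w) * X $$ (w,u))"
    using X by (simp add: trace_def scalar_prod_def lessThan_atLeast0)
  also have "\<dots> = (\<Sum>u<n. \<Sum>w<n. of_real ((cmod (X $$ (u,w)))\<^sup>2))"
  proof (intro sum.cong refl)
    fix u w assume "u \<in> {..<n}" "w \<in> {..<n}"
    then have "X $$ (w,u) = cnj (X $$ (u,w))" by (intro herm) auto
    then show "X $$ (u,w) * X $$ (w,u) = of_real ((cmod (X $$ (u,w)))\<^sup>2)"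
      by (simp add: complex_norm_square[symmetric])
  qed
  finally show ?thesis by simp
qed

lemma eigenvalue_involutory_mat:
  fixes A :: "'a::field mat"
  assumes A: "A \<in> carrier_mat n n" and inv: "A * A = 1\<^sub>m n" and ev: "eigenvalue A e"
  shows "e \<in> {-1, 1}"
proof -
  obtain v where v: "eigenvector A v e" using ev unfolding eigenvalue_def by auto
  then have vc: "v \<in> carrier_vec n" and "v \<noteq> 0\<^sub>v n"
    using A unfolding eigenvector_def by auto
  then obtain i where i: "i < n" "v $ i \<noteq> 0" by (metis eq_vecI index_zero_vec carrier_vecD)
  have "v = e ^ 2 \<cdot>\<^sub>v v"
    using eigenvector_pow[OF A v, of 2] inv A vc by (simp add: numeral_2_eq_2)
  then have "v $ i = e ^ 2 * v $ i" using i vc by (metis index_smult_vec(1) carrier_vecD)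
  then have "e ^ 2 = 1" using i by simp
  then show ?thesis by (auto simp: power2_eq_1_iff)
qed

lemma sum_eq_card_sum_squares_le_imp_eq_1:
  fixes d :: "'i \<Rightarrow> nat"
  assumes I: "finite I" and sum: "sum d I = card I" and sq: "(\<Sum>i\<in>I. (d i)\<^sup>2) \<le> sum d I"
    and i: "i \<in> I"
  shows "d i = 1"
proof -
  have le_sq: "d j \<le> (d j)\<^sup>2" for j by (simp add: power2_eq_square)
  then have "sum d I = (\<Sum>i\<in>I. (d i)\<^sup>2)" using sq by (simp add: antisym sum_mono)
  then have idem: "d j = (d j)\<^sup>2" if "j \<in> I" for j
    using sum_mono_inv[of d I "\<lambda>j. (d j)\<^sup>2"] le_sq that I by blast
  have le_1: "d j \<le> 1" if "j \<in> I" for j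
    using idem[OF that] by (cases "d j") (simp_all add: power2_eq_square)
  show ?thesis
    by (rule sum_mono_inv[of d I "\<lambda>_. 1", OF _ le_1 i I]) (use sum in simp)
qed

section \<open>Perfect matchings\<close>

lemma mK2_adj_iff_partner:
  assumes i: "i < 2 * m"
  shows "mK2_adj m i j \<longleftrightarrow> j = (if even i then i + 1 else i - 1)"
proof -
  have ij: "i = 2 * (i div 2) + i mod 2" "j = 2 * (j div 2) + j mod 2" "i mod 2 < 2" "j mod 2 < 2"
    by simp_all
  show ?thesis
  proof (cases "even i")
    case True
    then have "i mod 2 = 0" by simp
    then show ?thesis using ij i True unfolding mK2_adj_def
      by (auto; arith)
  next
    case False
    then have "i mod 2 = 1" by (simp add: odd_iff_mod_2_eq_one)
    then show ?thesis using ij i False unfolding mK2_adj_def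
      by (auto; arith)
  qed
qed

lemma fixed_point_free_involution_iso_mK2:
  fixes p :: "nat \<Rightarrow> nat"
  assumes p: "\<And>u. u < n \<Longrightarrow> p u < n \<and> p u \<noteq> u \<and> p (p u) = u"
  shows "\<exists>m f. bij_betw f {0..<n} {0..<2*m} \<and>
           (\<forall>u<n. \<forall>v<n. v = p u \<longleftrightarrow> mK2_adj m (f u) (f v))"
proof -
  define S where "S = {u. u < n \<and> u < p u}"
  define m where "m = card S"
  have "finite S" unfolding S_def by auto
  then obtain g where g: "bij_betw g S {0..<m}"
    using ex_bij_betw_finite_nat m_def by blast
  \<comment> \<open>The pair \<open>{u, p u}\<close> fills block \<open>g (min u (p u))\<close>, its smaller vertex the even slot.\<close>
  define f where "f u = 2 * g (min u (p u)) + (if u < p u then 0 else 1)" for u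
  have min_in_S: "min u (p u) \<in> S" if "u < n" for u
  proof (cases "u < p u")
    case True
    then show ?thesis using that unfolding S_def by simp
  next
    case False
    then have "p u < u" using p[OF that] by simp
    then show ?thesis using p[OF that] unfolding S_def by simp
  qed
  have same_pair: "min u (p u) = min v (p v) \<longleftrightarrow> v = u \<or> v = p u" if "u < n" "v < n" for u v
  proof
    assume eq: "min u (p u) = min v (p v)"
    have "min u (p u) = u \<or> min u (p u) = p u" "min v (p v) = v \<or> min v (p v) = p v"
      by (simp_all add: min_def)
    then show "v = u \<or> v = p u" using eq p[OF that(1)] p[OF that(2)] by metis
  next
    assume "v = u \<or> v = p u"
    then show "min u (p u) = min v (p v)" using p[OF that(1)] by (auto simp: min.commute)
  qed
  have g_eq_iff: "g s = g t \<longleftrightarrow> s = t" if "s \<in> S" "t \<in> S" for s t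
    using g that unfolding bij_betw_def inj_on_def by auto
  have f_div: "f u div 2 = g (min u (p u))" for u
    unfolding f_def by auto
  have f_mod: "f u mod 2 = (if u < p u then 0 else 1)" for u
    unfolding f_def by auto
  have same_block: "f u div 2 = f v div 2 \<longleftrightarrow> v = u \<or> v = p u" if "u < n" "v < n" for u v
    using f_div g_eq_iff min_in_S same_pair that by simp
  have f_eq_iff: "f u = f v \<longleftrightarrow> v = u" if "u < n" "v < n" for u v
  proof -
    have "f u = f v \<longleftrightarrow> f u div 2 = f v div 2 \<and> f u mod 2 = f v mod 2"
      by (metis div_mult_mod_eq)
    then show ?thesis
      using same_block[OF that] f_mod p[OF that(1)] by auto
  qed
  have f_range: "f u < 2 * m" if "u < n" for u
  proof -
    have "g (min u (p u)) < m" using g min_in_S[OF that] unfolding bij_betw_def by auto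
    moreover have "f u \<le> 2 * g (min u (p u)) + 1" unfolding f_def by simp
    ultimately show ?thesis by linarith
  qed
  have "{0..<2*m} \<subseteq> f ` {0..<n}"
  proof
    fix k assume "k \<in> {0..<2*m}"
    then have "k div 2 \<in> g ` S" using g unfolding bij_betw_def by auto
    then obtain s where s: "s \<in> S" "g s = k div 2" by auto
    then have sn: "s < n" "s < p s" "p s < n" "p (p s) = s" using p unfolding S_def by auto
    show "k \<in> f ` {0..<n}"
    proof (cases "even k")
      case True
      then have "f s = k" using s sn unfolding f_def by auto
      then show ?thesis using sn by force
    next
      case False
      then have "f (p s) = k" using s sn unfolding f_def by (auto simp: min_def)
      then show ?thesis using sn by force
    qed
  qed
  then have "bij_betw f {0..<n} {0..<2*m}"
    using f_eq_iff f_range unfolding bij_betw_def inj_on_def by fastforce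
  moreover have "v = p u \<longleftrightarrow> mK2_adj m (f u) (f v)" if "u < n" "v < n" for u v
    using f_range[OF that(1)] f_range[OF that(2)] f_eq_iff[OF that] same_block[OF that] p[OF that(1)]
    unfolding mK2_adj_def by auto
  ultimately show ?thesis by blast
qed

lemma underlying_iso_mK2_iff_unique_neighbour:
  assumes "digraph n A"
  shows "(\<exists>m. underlying_iso_mK2 n A m) \<longleftrightarrow> (\<forall>u<n. \<exists>!v. v < n \<and> underlying_adj A u v)"
proof
  assume "\<exists>m. underlying_iso_mK2 n A m"
  then obtain m f where f: "bij_betw f {0..<n} {0..<2*m}"
    and adj: "\<And>u v. u < n \<Longrightarrow> v < n \<Longrightarrow> underlying_adj A u v \<longleftrightarrow> mK2_adj m (f u) (f v)"
    unfolding underlying_iso_mK2_def by auto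
  show "\<forall>u<n. \<exists>!v. v < n \<and> underlying_adj A u v"
  proof (intro allI impI)
    fix u assume u: "u < n"
    then have fu: "f u < 2 * m" using f unfolding bij_betw_def by auto
    define j where "j = (if even (f u) then f u + 1 else f u - 1)"
    have "mK2_adj m (f u) j" using mK2_adj_iff_partner[OF fu] unfolding j_def by simp
    then have "j \<in> f ` {0..<n}" using f unfolding mK2_adj_def bij_betw_def by auto
    then obtain v where v: "v < n" "f v = j" by auto
    have "underlying_adj A u w \<longleftrightarrow> w = v" if "w < n" for w
    proof -
      have "underlying_adj A u w \<longleftrightarrow> f w = f v"
        using adj[OF u that] mK2_adj_iff_partner[OF fu] v unfolding j_def by simp
      also have "\<dots> \<longleftrightarrow> w = v" using f that v unfolding bij_betw_def inj_on_def by auto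
      finally show ?thesis .
    qed
    then show "\<exists>!v. v < n \<and> underlying_adj A u v" using v by blast
  qed
next
  assume unique: "\<forall>u<n. \<exists>!v. v < n \<and> underlying_adj A u v"
  then obtain p where p: "\<And>u. u < n \<Longrightarrow> p u < n \<and> underlying_adj A u (p u)"
    by metis
  have adj_iff: "underlying_adj A u v \<longleftrightarrow> v = p u" if "u < n" "v < n" for u v
    using unique p that by blast
  have "p u < n \<and> p u \<noteq> u \<and> p (p u) = u" if "u < n" for u
  proof -
    have "underlying_adj A (p u) u" using p[OF that] unfolding underlying_adj_def by auto
    moreover have "\<not> underlying_adj A u u" using assms unfolding digraph_def underlying_adj_def by auto
    ultimately show ?thesis using p[OF that] adj_iff[of "p u" u] that by auto
  qed
  then obtain m f where "bij_betw f {0..<n} {0..<2*m}"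
    and "\<forall>u<n. \<forall>v<n. v = p u \<longleftrightarrow> mK2_adj m (f u) (f v)"
    using fixed_point_free_involution_iso_mK2 by blast
  then have "underlying_iso_mK2 n A m"
    unfolding underlying_iso_mK2_def using adj_iff by auto
  then show "\<exists>m. underlying_iso_mK2 n A m" ..
qed

section \<open>The Hermitian adjacency matrix\<close>

definition herm_adj_entry :: "(nat \<times> nat) set \<Rightarrow> nat \<Rightarrow> nat \<Rightarrow> complex" where
  "herm_adj_entry A u v =
     (if (u,v) \<in> A \<and> (v,u) \<in> A then 1
      else if (u,v) \<in> A then \<i>
      else if (v,u) \<in> A then - \<i>
      else 0)"

definition underlying_degree :: "nat \<Rightarrow> (nat \<times> nat) set \<Rightarrow> nat \<Rightarrow> nat" where
  "underlying_degree n A u = card {v. v < n \<and> underlying_adj A u v}"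

lemma herm_adj_carrier_mat: "herm_adj n A \<in> carrier_mat n n"
  unfolding herm_adj_def by simp

lemma index_herm_adj: "u < n \<Longrightarrow> v < n \<Longrightarrow> herm_adj n A $$ (u,v) = herm_adj_entry A u v"
  unfolding herm_adj_def herm_adj_entry_def by simp

lemma herm_adj_entry_swap: "herm_adj_entry A v u = cnj (herm_adj_entry A u v)"
  unfolding herm_adj_entry_def by auto

lemma herm_adj_entry_mult_swap:
  "herm_adj_entry A u v * herm_adj_entry A v u = (if underlying_adj A u v then 1 else 0)"
  unfolding herm_adj_entry_def underlying_adj_def by auto

lemma herm_adj_entry_eq_0: "\<not> underlying_adj A u v \<Longrightarrow> herm_adj_entry A u v = 0"
  unfolding herm_adj_entry_def underlying_adj_def by auto

lemma index_square_herm_adj: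
  assumes "u < n" "w < n"
  shows "(herm_adj n A * herm_adj n A) $$ (u,w) = (\<Sum>v<n. herm_adj_entry A u v * herm_adj_entry A v w)"
  using assms herm_adj_carrier_mat[of n A]
  by (simp add: scalar_prod_def lessThan_atLeast0 index_herm_adj)

lemma diag_square_herm_adj:
  assumes "u < n"
  shows "(herm_adj n A * herm_adj n A) $$ (u,u) = of_nat (underlying_degree n A u)"
proof -
  have "(herm_adj n A * herm_adj n A) $$ (u,u) = (\<Sum>v<n. if underlying_adj A u v then 1 else 0)"
    using assms by (simp add: index_square_herm_adj herm_adj_entry_mult_swap)
  also have "\<dots> = of_nat (card ({..<n} \<inter> {v. underlying_adj A u v}))"
    by (simp add: sum.If_cases)
  also have "{..<n} \<inter> {v. underlying_adj A u v} = {v. v < n \<and> underlying_adj A u v}"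
    by auto
  finally show ?thesis unfolding underlying_degree_def .
qed

lemma square_herm_adj_hermitian:
  assumes "u < n" "w < n"
  shows "(herm_adj n A * herm_adj n A) $$ (w,u) = cnj ((herm_adj n A * herm_adj n A) $$ (u,w))"
proof -
  have "herm_adj_entry A w v * herm_adj_entry A v u
        = cnj (herm_adj_entry A u v * herm_adj_entry A v w)" for v
    using herm_adj_entry_swap[of A w v] herm_adj_entry_swap[of A v u] by simp
  then show ?thesis using assms by (simp add: index_square_herm_adj)
qed

lemma underlying_degree_eq_1_iff:
  "underlying_degree n A u = 1 \<longleftrightarrow> (\<exists>!v. v < n \<and> underlying_adj A u v)"
proof
  assume "underlying_degree n A u = 1"
  then obtain x where "{v. v < n \<and> underlying_adj A u v} = {x}"
    unfolding underlying_degree_def by (rule card_1_singletonE)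
  then show "\<exists>!v. v < n \<and> underlying_adj A u v" by (metis mem_Collect_eq singletonD singletonI)
next
  assume "\<exists>!v. v < n \<and> underlying_adj A u v"
  then obtain x where "{v. v < n \<and> underlying_adj A u v} = {x}" by blast
  then show "underlying_degree n A u = 1" by (simp add: underlying_degree_def)
qed

lemma square_herm_adj_eq_1:
  assumes unique: "\<forall>u<n. \<exists>!v. v < n \<and> underlying_adj A u v"
  shows "herm_adj n A * herm_adj n A = 1\<^sub>m n"
proof (rule eq_matI)
  fix u w assume "u < dim_row (1\<^sub>m n)" "w < dim_col (1\<^sub>m n)"
  then have u: "u < n" and w: "w < n" by auto
  show "(herm_adj n A * herm_adj n A) $$ (u,w) = 1\<^sub>m n $$ (u,w)"
  proof (cases "u = w")
    case True
    then show ?thesis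
      using diag_square_herm_adj[OF u] unique u underlying_degree_eq_1_iff by simp
  next
    case False
    have "herm_adj_entry A u v * herm_adj_entry A v w = 0" if "v < n" for v
    proof (cases "underlying_adj A u v \<and> underlying_adj A v w")
      case True
      then have "underlying_adj A v u" unfolding underlying_adj_def by auto
      then have "u = w" using True unique that u w by blast
      with \<open>u \<noteq> w\<close> show ?thesis by simp
    next
      case False
      then show ?thesis using herm_adj_entry_eq_0 by auto
    qed
    then have "(\<Sum>v<n. herm_adj_entry A u v * herm_adj_entry A v w) = 0"
      by (intro sum.neutral) simp
    then show ?thesis using False u w by (simp add: index_square_herm_adj)
  qed
qed (use herm_adj_carrier_mat[of n A] in auto)

lemma unit_spectrum_imp_underlying_degree_eq_1:
  assumes spec: "\<forall>e. eigenvalue (herm_adj n A) e \<longrightarrow> e \<in> {-1, 1}" and u: "u < n"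
  shows "underlying_degree n A u = 1"
proof -
  define H where "H = herm_adj n A"
  define M where "M = H * H"
  define d where "d = underlying_degree n A"
  have H: "H \<in> carrier_mat n n" unfolding H_def by (rule herm_adj_carrier_mat)
  have M: "M \<in> carrier_mat n n" unfolding M_def using H by simp
  have diag: "M $$ (v,v) = of_nat (d v)" if "v < n" for v
    unfolding M_def H_def d_def using diag_square_herm_adj[OF that] .
  have "H ^\<^sub>m 2 = M" unfolding M_def using H by (simp add: numeral_2_eq_2)
  then have trace_M: "trace M = of_nat n"
    using trace_even_pow_mat_unit_spectrum[OF H spec[folded H_def], of 2] by simp
  have "H ^\<^sub>m 4 = H * H * H * H" using H by (simp add: numeral_eq_Suc)
  also have "\<dots> = M * M" unfolding M_def using H by (simp add: assoc_mult_mat[of _ n n _ n _ n])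
  finally have trace_MM: "trace (M * M) = of_nat n"
    using trace_even_pow_mat_unit_spectrum[OF H spec[folded H_def], of 4] by simp
  have sum_d: "(\<Sum>v<n. d v) = n"
  proof -
    have "of_nat (\<Sum>v<n. d v) = trace M" using M diag by (simp add: trace_def)
    then show ?thesis using trace_M by (metis of_nat_eq_iff)
  qed
  have "real (\<Sum>v<n. (d v)\<^sup>2) = (\<Sum>v<n. (cmod (M $$ (v,v)))\<^sup>2)"
    unfolding of_nat_sum by (intro sum.cong refl) (simp add: diag)
  also have "\<dots> \<le> (\<Sum>v<n. \<Sum>w<n. (cmod (M $$ (v,w)))\<^sup>2)"
  proof (rule sum_mono)
    fix v assume "v \<in> {..<n}"
    then show "(cmod (M $$ (v,v)))\<^sup>2 \<le> (\<Sum>w<n. (cmod (M $$ (v,w)))\<^sup>2)"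
      by (rule member_le_sum[where f = "\<lambda>w. (cmod (M $$ (v,w)))\<^sup>2"]) auto
  qed
  also have "\<dots> = real n"
  proof -
    have "M $$ (w,v) = cnj (M $$ (v,w))" if "v < n" "w < n" for v w
      unfolding M_def H_def using square_herm_adj_hermitian[OF that] .
    then have "trace (M * M) = of_real (\<Sum>v<n. \<Sum>w<n. (cmod (M $$ (v,w)))\<^sup>2)"
      by (rule trace_mult_self_hermitian[OF M])
    then have "complex_of_real (\<Sum>v<n. \<Sum>w<n. (cmod (M $$ (v,w)))\<^sup>2) = complex_of_real (real n)"
      using trace_MM by simp
    then show ?thesis by (rule of_real_eq_iff[THEN iffD1])
  qed
  finally have "(\<Sum>v<n. (d v)\<^sup>2) \<le> (\<Sum>v<n. d v)" using sum_d by linarith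
  then show ?thesis
    using sum_eq_card_sum_squares_le_imp_eq_1[of "{..<n}" d u] sum_d u unfolding d_def by simp
qed

lemma herm_adj_unit_spectrum_iff_unique_neighbour:
  "(\<forall>e. eigenvalue (herm_adj n A) e \<longrightarrow> e \<in> {-1, 1})
     \<longleftrightarrow> (\<forall>u<n. \<exists>!v. v < n \<and> underlying_adj A u v)"
proof
  assume "\<forall>e. eigenvalue (herm_adj n A) e \<longrightarrow> e \<in> {-1, 1}"
  then show "\<forall>u<n. \<exists>!v. v < n \<and> underlying_adj A u v"
    using unit_spectrum_imp_underlying_degree_eq_1 underlying_degree_eq_1_iff by blast
next
  assume "\<forall>u<n. \<exists>!v. v < n \<and> underlying_adj A u v"
  then show "\<forall>e. eigenvalue (herm_adj n A) e \<longrightarrow> e \<in> {-1, 1}"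
    using eigenvalue_involutory_mat[OF herm_adj_carrier_mat square_herm_adj_eq_1] by blast
qed

theorem theorem9p1:
  fixes n :: nat and A :: "(nat \<times> nat) set"
  assumes "digraph n A"
  shows "(\<forall>ev::complex. eigenvalue (herm_adj n A) ev \<longrightarrow> ev \<in> {-1, 1})
         \<longleftrightarrow> (\<exists>m. underlying_iso_mK2 n A m)"
  using herm_adj_unit_spectrum_iff_unique_neighbour underlying_iso_mK2_iff_unique_neighbour[OF assms]
  by simp

end
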